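(* Let $a\neq0$ be a constant and let $\phi(x,t)$ be a smooth function with $\phi_x\neq0$ satisfying $$(1-\partial_x^2)\frac{\phi_t}{\phi_x}+a\{\phi;x\}=0.$$ Then $u=-\phi_t/\phi_x$ satisfies the Camassa–Holm equation $$u_t-u_{xxt}+a u_{xxx}+3uu_x-2u_xu_{xx}-uu_{xxx}=0.$$
   Context: The Schwarzian derivative of a function $\phi(x,t)$ with $\phi_x\neq0$ is $\{\phi;x\}=\frac{\phi_{xxx}}{\phi_x}-\frac32\frac{\phi_{xx}^2}{\phi_x^2}$. All functions are smooth. *)

theory Defs
  imports "HOL-Analysis.Analysis"
begin

definition pdx :: "(real \<Rightarrow> real \<Rightarrow> real) \<Rightarrow> real \<Rightarrow> real \<Rightarrow> real" where
  "pdx f = (\<lambda>x t. deriv (\<lambda>y. f y t) x)"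

definition pdt :: "(real \<Rightarrow> real \<Rightarrow> real) \<Rightarrow> real \<Rightarrow> real \<Rightarrow> real" where
  "pdt f = (\<lambda>x t. deriv (\<lambda>s. f x s) t)"

text \<open>Iterated partial derivative: True = d/dx, False = d/dt (applied right to left).\<close>
fun iterD :: "bool list \<Rightarrow> (real \<Rightarrow> real \<Rightarrow> real) \<Rightarrow> real \<Rightarrow> real \<Rightarrow> real" where
  "iterD [] f = f"
| "iterD (b # bs) f = (if b then pdx else pdt) (iterD bs f)"

definition smooth2 :: "(real \<Rightarrow> real \<Rightarrow> real) \<Rightarrow> bool" where
  "smooth2 f \<longleftrightarrow> (\<forall>bs. continuous_on UNIV (\<lambda>(x, t). iterD bs f x t) \<and>
      (\<forall>x t. (\<lambda>y. iterD bs f y t) differentiable (at x) \<and>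
             (\<lambda>s. iterD bs f x s) differentiable (at t)))"

definition schwarzian_x :: "(real \<Rightarrow> real \<Rightarrow> real) \<Rightarrow> real \<Rightarrow> real \<Rightarrow> real" where
  "schwarzian_x \<phi> x t = pdx (pdx (pdx \<phi>)) x t / pdx \<phi> x t
     - 3/2 * (pdx (pdx \<phi>) x t)\<^sup>2 / (pdx \<phi> x t)\<^sup>2"

end

theory Submission
  imports Defs
begin

(* Put u = -phi_t / phi_x, so that phi_t + u phi_x = 0: phi is transported by u.
   Differentiating this in x (using Clairaut's theorem) transports phi_x, phi_xx and phi_xxx,
   and the Schwarzian S = {phi; x} then satisfies S_t + u S_x + 2 u_x S + u_xxx = 0, the
   infinitesimal form of the composition law of the Schwarzian derivative. The hypothesis says
   that the momentum m = u - u_xx equals a S, hence m_t + u m_x + 2 u_x m + a u_xxx = 0,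
   which is the Camassa-Holm equation written in terms of m. *)

definition x_differentiable :: "(real \<Rightarrow> real \<Rightarrow> real) \<Rightarrow> bool" where
  "x_differentiable f \<longleftrightarrow> (\<forall>x t. (\<lambda>y. f y t) differentiable (at x))"

definition t_differentiable :: "(real \<Rightarrow> real \<Rightarrow> real) \<Rightarrow> bool" where
  "t_differentiable f \<longleftrightarrow> (\<forall>x t. (\<lambda>s. f x s) differentiable (at t))"

lemma x_differentiable_has_pdx:
  "x_differentiable f \<Longrightarrow> ((\<lambda>y. f y t) has_real_derivative pdx f x t) (at x within S)"
  unfolding x_differentiable_def pdx_def
  by (simp add: DERIV_deriv_iff_real_differentiable has_field_derivative_at_within)

lemma t_differentiable_has_pdt:
  "t_differentiable f \<Longrightarrow> ((\<lambda>s. f x s) has_real_derivative pdt f x t) (at t within S)"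
  unfolding t_differentiable_def pdt_def
  by (simp add: DERIV_deriv_iff_real_differentiable has_field_derivative_at_within)

lemma x_differentiableI:
  "(\<And>x t. ((\<lambda>y. f y t) has_real_derivative f' x t) (at x)) \<Longrightarrow> x_differentiable f"
  unfolding x_differentiable_def using real_differentiable_def by blast

lemma t_differentiableI:
  "(\<And>x t. ((\<lambda>s. f x s) has_real_derivative f' x t) (at t)) \<Longrightarrow> t_differentiable f"
  unfolding t_differentiable_def using real_differentiable_def by blast

lemma pdx_eqI:
  "(\<And>x t. ((\<lambda>y. f y t) has_real_derivative f' x t) (at x)) \<Longrightarrow> pdx f = f'"
  by (auto simp: pdx_def intro!: ext DERIV_imp_deriv)

lemma pdt_eqI:
  "(\<And>x t. ((\<lambda>s. f x s) has_real_derivative f' x t) (at t)) \<Longrightarrow> pdt f = f'"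
  by (auto simp: pdt_def intro!: ext DERIV_imp_deriv)

lemma pdx_uminus: "x_differentiable f \<Longrightarrow> pdx (\<lambda>x t. - f x t) = (\<lambda>x t. - pdx f x t)"
  by (rule pdx_eqI) (auto intro!: derivative_eq_intros x_differentiable_has_pdx)

lemma iterD_append: "iterD bs (iterD cs f) = iterD (bs @ cs) f"
  by (induction bs) auto

lemma smooth2_iterD: "smooth2 f \<Longrightarrow> smooth2 (iterD bs f)"
  unfolding smooth2_def iterD_append by blast

lemma smooth2_pdx: "smooth2 f \<Longrightarrow> smooth2 (pdx f)"
  using smooth2_iterD[of f "[True]"] by simp

lemma smooth2_pdt: "smooth2 f \<Longrightarrow> smooth2 (pdt f)"
  using smooth2_iterD[of f "[False]"] by simp

lemma smooth2_x_differentiable: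
  assumes "smooth2 f" shows "x_differentiable f"
proof -
  have "\<forall>x t. (\<lambda>y. iterD [] f y t) differentiable (at x)"
    using assms unfolding smooth2_def by blast
  then show ?thesis unfolding x_differentiable_def by simp
qed

lemma smooth2_t_differentiable:
  assumes "smooth2 f" shows "t_differentiable f"
proof -
  have "\<forall>x t. (\<lambda>s. iterD [] f x s) differentiable (at t)"
    using assms unfolding smooth2_def by blast
  then show ?thesis unfolding t_differentiable_def by simp
qed

lemma smooth2_continuous_pdt_pdx:
  assumes "smooth2 f" shows "continuous (at z) (\<lambda>(x, t). pdt (pdx f) x t)"
proof -
  have "continuous_on UNIV (\<lambda>(x, t). iterD [False, True] f x t)"
    using assms unfolding smooth2_def by blast
  then have "continuous_on UNIV (\<lambda>(x, t). pdt (pdx f) x t)" by simp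
  then show ?thesis by (rule continuous_on_interior) simp
qed

lemma smooth2_continuous_pdx_pdt:
  assumes "smooth2 f" shows "continuous (at z) (\<lambda>(x, t). pdx (pdt f) x t)"
proof -
  have "continuous_on UNIV (\<lambda>(x, t). iterD [True, False] f x t)"
    using assms unfolding smooth2_def by blast
  then have "continuous_on UNIV (\<lambda>(x, t). pdx (pdt f) x t)" by simp
  then show ?thesis by (rule continuous_on_interior) simp
qed

lemma second_difference_pdt_pdx:
  assumes f: "smooth2 f" and h: "h > 0"
  obtains \<xi> \<eta> where "x < \<xi>" "\<xi> < x + h" "t < \<eta>" "\<eta> < t + h"
    "f (x + h) (t + h) - f (x + h) t - (f x (t + h) - f x t) = h\<^sup>2 * pdt (pdx f) \<xi> \<eta>"
proof -
  have fx: "x_differentiable f" and fxt: "t_differentiable (pdx f)"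
    using f by (simp_all add: smooth2_x_differentiable smooth2_t_differentiable smooth2_pdx)
  have "\<exists>\<xi>>x. \<xi> < x + h \<and>
    f (x + h) (t + h) - f (x + h) t - (f x (t + h) - f x t) = (x + h - x) * (pdx f \<xi> (t + h) - pdx f \<xi> t)"
    by (rule MVT2) (use h in \<open>auto intro!: derivative_eq_intros x_differentiable_has_pdx[OF fx]\<close>)
  then obtain \<xi> where \<xi>: "x < \<xi>" "\<xi> < x + h"
    "f (x + h) (t + h) - f (x + h) t - (f x (t + h) - f x t) = h * (pdx f \<xi> (t + h) - pdx f \<xi> t)"
    by auto
  have "\<exists>\<eta>>t. \<eta> < t + h \<and> pdx f \<xi> (t + h) - pdx f \<xi> t = (t + h - t) * pdt (pdx f) \<xi> \<eta>"
    by (rule MVT2) (use h in \<open>auto intro!: t_differentiable_has_pdt[OF fxt]\<close>)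
  then obtain \<eta> where \<eta>: "t < \<eta>" "\<eta> < t + h"
    "pdx f \<xi> (t + h) - pdx f \<xi> t = h * pdt (pdx f) \<xi> \<eta>"
    by auto
  show thesis
    using that[OF \<xi>(1,2) \<eta>(1,2)] \<xi>(3) \<eta>(3) by (simp add: power2_eq_square)
qed

lemma second_difference_pdx_pdt:
  assumes f: "smooth2 f" and h: "h > 0"
  obtains \<xi> \<eta> where "x < \<xi>" "\<xi> < x + h" "t < \<eta>" "\<eta> < t + h"
    "f (x + h) (t + h) - f (x + h) t - (f x (t + h) - f x t) = h\<^sup>2 * pdx (pdt f) \<xi> \<eta>"
proof -
  have ft: "t_differentiable f" and ftx: "x_differentiable (pdt f)"
    using f by (simp_all add: smooth2_x_differentiable smooth2_t_differentiable smooth2_pdt)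
  have "\<exists>\<eta>>t. \<eta> < t + h \<and>
    f (x + h) (t + h) - f x (t + h) - (f (x + h) t - f x t) = (t + h - t) * (pdt f (x + h) \<eta> - pdt f x \<eta>)"
    by (rule MVT2) (use h in \<open>auto intro!: derivative_eq_intros t_differentiable_has_pdt[OF ft]\<close>)
  then obtain \<eta> where \<eta>: "t < \<eta>" "\<eta> < t + h"
    "f (x + h) (t + h) - f (x + h) t - (f x (t + h) - f x t) = h * (pdt f (x + h) \<eta> - pdt f x \<eta>)"
    by (auto simp: algebra_simps)
  have "\<exists>\<xi>>x. \<xi> < x + h \<and> pdt f (x + h) \<eta> - pdt f x \<eta> = (x + h - x) * pdx (pdt f) \<xi> \<eta>"
    by (rule MVT2) (use h in \<open>auto intro!: x_differentiable_has_pdx[OF ftx]\<close>)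
  then obtain \<xi> where \<xi>: "x < \<xi>" "\<xi> < x + h"
    "pdt f (x + h) \<eta> - pdt f x \<eta> = h * pdx (pdt f) \<xi> \<eta>"
    by auto
  show thesis
    using that[OF \<xi>(1,2) \<eta>(1,2)] \<xi>(3) \<eta>(3) by (simp add: power2_eq_square)
qed

(* Clairaut: both mixed partials are second difference quotients at nearby points. *)
lemma smooth2_pdt_pdx_commute:
  assumes f: "smooth2 f"
  shows "pdt (pdx f) = pdx (pdt f)"
proof (intro ext)
  fix x t
  let ?A = "\<lambda>(x, t). pdt (pdx f) x t" and ?B = "\<lambda>(x, t). pdx (pdt f) x t"
  have "\<bar>pdt (pdx f) x t - pdx (pdt f) x t\<bar> \<le> 0 + e" if "e > 0" for e
  proof -
    have e: "e / 2 > 0" using \<open>e > 0\<close> by simp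
    obtain d1 where d1: "d1 > 0" "\<And>z. dist z (x, t) < d1 \<Longrightarrow> dist (?A z) (?A (x, t)) < e / 2"
      using smooth2_continuous_pdt_pdx[OF f] e unfolding continuous_at_eps_delta by blast
    obtain d2 where d2: "d2 > 0" "\<And>z. dist z (x, t) < d2 \<Longrightarrow> dist (?B z) (?B (x, t)) < e / 2"
      using smooth2_continuous_pdx_pdt[OF f] e unfolding continuous_at_eps_delta by blast
    define h where "h = min d1 d2 / 2"
    have h: "h > 0" using d1 d2 by (simp add: h_def)
    have near: "dist (\<xi>, \<eta>) (x, t) < min d1 d2"
      if "x < \<xi>" "\<xi> < x + h" "t < \<eta>" "\<eta> < t + h" for \<xi> \<eta>
    proof -
      have "dist (\<xi>, \<eta>) (x, t) \<le> \<bar>dist \<xi> x\<bar> + \<bar>dist \<eta> t\<bar>"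
        unfolding dist_Pair_Pair by (rule sqrt_sum_squares_le_sum_abs)
      also have "\<dots> < 2 * h" using that by (simp add: dist_real_def)
      also have "\<dots> = min d1 d2" by (simp add: h_def)
      finally show ?thesis .
    qed
    obtain \<xi> \<eta> where \<xi>\<eta>: "x < \<xi>" "\<xi> < x + h" "t < \<eta>" "\<eta> < t + h"
      and A: "f (x + h) (t + h) - f (x + h) t - (f x (t + h) - f x t) = h\<^sup>2 * ?A (\<xi>, \<eta>)"
      by (rule second_difference_pdt_pdx[OF f h, where x=x and t=t]) simp
    obtain \<xi>' \<eta>' where \<xi>\<eta>': "x < \<xi>'" "\<xi>' < x + h" "t < \<eta>'" "\<eta>' < t + h"
      and B: "f (x + h) (t + h) - f (x + h) t - (f x (t + h) - f x t) = h\<^sup>2 * ?B (\<xi>', \<eta>')"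
      by (rule second_difference_pdx_pdt[OF f h, where x=x and t=t]) simp
    have "pdt (pdx f) \<xi> \<eta> = pdx (pdt f) \<xi>' \<eta>'" using A B h by simp
    moreover have "\<bar>pdt (pdx f) \<xi> \<eta> - pdt (pdx f) x t\<bar> < e / 2"
      using d1(2)[of "(\<xi>, \<eta>)"] near[OF \<xi>\<eta>] by (simp add: dist_real_def)
    moreover have "\<bar>pdx (pdt f) \<xi>' \<eta>' - pdx (pdt f) x t\<bar> < e / 2"
      using d2(2)[of "(\<xi>', \<eta>')"] near[OF \<xi>\<eta>'] by (simp add: dist_real_def)
    ultimately show ?thesis by arith
  qed
  then have "\<bar>pdt (pdx f) x t - pdx (pdt f) x t\<bar> \<le> 0" by (rule field_le_epsilon)
  then show "pdt (pdx f) x t = pdx (pdt f) x t" by simp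
qed

lemma schwarzian_form_has_real_derivative:
  fixes P P1 P2 :: "real \<Rightarrow> real"
  assumes "(P has_real_derivative dP) (at s)" "(P1 has_real_derivative dP1) (at s)"
    "(P2 has_real_derivative dP2) (at s)" "P s \<noteq> 0"
  shows "((\<lambda>s. P2 s / P s - 3/2 * (P1 s)\<^sup>2 / (P s)\<^sup>2) has_real_derivative
    dP2 / P s - P2 s * dP / (P s)\<^sup>2 - 3 * P1 s * dP1 / (P s)\<^sup>2 + 3 * (P1 s)\<^sup>2 * dP / (P s)^3) (at s)"
  using assms
  by (auto intro!: derivative_eq_intros simp: field_simps power2_eq_square power3_eq_cube)

lemma has_pdx_schwarzian_x:
  assumes \<phi>: "smooth2 \<phi>" and nz: "\<And>x t. pdx \<phi> x t \<noteq> 0"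
  shows "((\<lambda>y. schwarzian_x \<phi> y t) has_real_derivative
    pdx (pdx (pdx (pdx \<phi>))) x t / pdx \<phi> x t
    - pdx (pdx (pdx \<phi>)) x t * pdx (pdx \<phi>) x t / (pdx \<phi> x t)\<^sup>2
    - 3 * pdx (pdx \<phi>) x t * pdx (pdx (pdx \<phi>)) x t / (pdx \<phi> x t)\<^sup>2
    + 3 * (pdx (pdx \<phi>) x t)\<^sup>2 * pdx (pdx \<phi>) x t / (pdx \<phi> x t)^3) (at x)"
  unfolding schwarzian_x_def
  by (intro schwarzian_form_has_real_derivative x_differentiable_has_pdx nz
        smooth2_x_differentiable smooth2_pdx \<phi>)

lemma has_pdt_schwarzian_x:
  assumes \<phi>: "smooth2 \<phi>" and nz: "\<And>x t. pdx \<phi> x t \<noteq> 0"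
  shows "((\<lambda>s. schwarzian_x \<phi> x s) has_real_derivative
    pdt (pdx (pdx (pdx \<phi>))) x t / pdx \<phi> x t
    - pdx (pdx (pdx \<phi>)) x t * pdt (pdx \<phi>) x t / (pdx \<phi> x t)\<^sup>2
    - 3 * pdx (pdx \<phi>) x t * pdt (pdx (pdx \<phi>)) x t / (pdx \<phi> x t)\<^sup>2
    + 3 * (pdx (pdx \<phi>) x t)\<^sup>2 * pdt (pdx \<phi>) x t / (pdx \<phi> x t)^3) (at t)"
  unfolding schwarzian_x_def
  by (intro schwarzian_form_has_real_derivative t_differentiable_has_pdt nz
        smooth2_t_differentiable smooth2_pdx \<phi>)

lemma x_differentiable_schwarzian_x:
  "smooth2 \<phi> \<Longrightarrow> (\<And>x t. pdx \<phi> x t \<noteq> 0) \<Longrightarrow> x_differentiable (schwarzian_x \<phi>)"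
  by (rule x_differentiableI) (rule has_pdx_schwarzian_x)

lemma t_differentiable_schwarzian_x:
  "smooth2 \<phi> \<Longrightarrow> (\<And>x t. pdx \<phi> x t \<noteq> 0) \<Longrightarrow> t_differentiable (schwarzian_x \<phi>)"
  by (rule t_differentiableI) (rule has_pdt_schwarzian_x)

lemma transport_pdt_pdx:
  assumes \<phi>: "smooth2 \<phi>" and transport: "pdt \<phi> = (\<lambda>x t. - (u x t * pdx \<phi> x t))"
    and u: "x_differentiable u" "x_differentiable (pdx u)" "x_differentiable (pdx (pdx u))"
  shows "pdt (pdx \<phi>) = (\<lambda>x t. - (pdx u x t * pdx \<phi> x t + u x t * pdx (pdx \<phi>) x t))"
    and "pdt (pdx (pdx \<phi>)) = (\<lambda>x t. - (pdx (pdx u) x t * pdx \<phi> x t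
      + 2 * pdx u x t * pdx (pdx \<phi>) x t + u x t * pdx (pdx (pdx \<phi>)) x t))"
    and "pdt (pdx (pdx (pdx \<phi>))) = (\<lambda>x t. - (pdx (pdx (pdx u)) x t * pdx \<phi> x t
      + 3 * pdx (pdx u) x t * pdx (pdx \<phi>) x t + 3 * pdx u x t * pdx (pdx (pdx \<phi>)) x t
      + u x t * pdx (pdx (pdx (pdx \<phi>))) x t))"
proof -
  have \<phi>': "smooth2 (pdx \<phi>)" "smooth2 (pdx (pdx \<phi>))" "smooth2 (pdx (pdx (pdx \<phi>)))"
    using \<phi> by (simp_all add: smooth2_pdx)
  note D = x_differentiable_has_pdx[OF u(1)] x_differentiable_has_pdx[OF u(2)]
    x_differentiable_has_pdx[OF u(3)] x_differentiable_has_pdx[OF smooth2_x_differentiable[OF \<phi>'(1)]]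
    x_differentiable_has_pdx[OF smooth2_x_differentiable[OF \<phi>'(2)]]
    x_differentiable_has_pdx[OF smooth2_x_differentiable[OF \<phi>'(3)]]
  show 1: "pdt (pdx \<phi>) = (\<lambda>x t. - (pdx u x t * pdx \<phi> x t + u x t * pdx (pdx \<phi>) x t))"
    unfolding smooth2_pdt_pdx_commute[OF \<phi>] transport
    by (rule pdx_eqI) (auto intro!: derivative_eq_intros D)
  show 2: "pdt (pdx (pdx \<phi>)) = (\<lambda>x t. - (pdx (pdx u) x t * pdx \<phi> x t
      + 2 * pdx u x t * pdx (pdx \<phi>) x t + u x t * pdx (pdx (pdx \<phi>)) x t))"
    unfolding smooth2_pdt_pdx_commute[OF \<phi>'(1)] 1
    by (rule pdx_eqI) (auto intro!: derivative_eq_intros D simp: algebra_simps)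
  show "pdt (pdx (pdx (pdx \<phi>))) = (\<lambda>x t. - (pdx (pdx (pdx u)) x t * pdx \<phi> x t
      + 3 * pdx (pdx u) x t * pdx (pdx \<phi>) x t + 3 * pdx u x t * pdx (pdx (pdx \<phi>)) x t
      + u x t * pdx (pdx (pdx (pdx \<phi>))) x t))"
    unfolding smooth2_pdt_pdx_commute[OF \<phi>'(2)] 2
    by (rule pdx_eqI) (auto intro!: derivative_eq_intros D simp: algebra_simps)
qed

lemma schwarzian_x_transport:
  assumes \<phi>: "smooth2 \<phi>" and nz: "\<And>x t. pdx \<phi> x t \<noteq> 0"
    and transport: "pdt \<phi> = (\<lambda>x t. - (u x t * pdx \<phi> x t))"
    and u: "x_differentiable u" "x_differentiable (pdx u)" "x_differentiable (pdx (pdx u))"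
  shows "pdt (schwarzian_x \<phi>) x t + u x t * pdx (schwarzian_x \<phi>) x t
    + 2 * pdx u x t * schwarzian_x \<phi> x t + pdx (pdx (pdx u)) x t = 0"
proof -
  define p p1 p2 p3 where "p = pdx \<phi> x t" and "p1 = pdx (pdx \<phi>) x t"
    and "p2 = pdx (pdx (pdx \<phi>)) x t" and "p3 = pdx (pdx (pdx (pdx \<phi>))) x t"
  define u0 u1 u2 u3 where "u0 = u x t" and "u1 = pdx u x t"
    and "u2 = pdx (pdx u) x t" and "u3 = pdx (pdx (pdx u)) x t"
  note defs = p_def p1_def p2_def p3_def u0_def u1_def u2_def u3_def
  have "p \<noteq> 0" using nz by (simp add: p_def)
  have S: "schwarzian_x \<phi> x t = p2 / p - 3/2 * p1\<^sup>2 / p\<^sup>2"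
    by (simp add: schwarzian_x_def defs)
  have Sx: "pdx (schwarzian_x \<phi>) x t = p3 / p - p2 * p1 / p\<^sup>2 - 3 * p1 * p2 / p\<^sup>2 + 3 * p1\<^sup>2 * p1 / p^3"
    by (simp add: pdx_eqI[OF has_pdx_schwarzian_x[OF \<phi> nz]] defs)
  have St: "pdt (schwarzian_x \<phi>) x t =
      - (u3 * p + 3 * u2 * p1 + 3 * u1 * p2 + u0 * p3) / p
      - p2 * - (u1 * p + u0 * p1) / p\<^sup>2
      - 3 * p1 * - (u2 * p + 2 * u1 * p1 + u0 * p2) / p\<^sup>2
      + 3 * p1\<^sup>2 * - (u1 * p + u0 * p1) / p^3"
    by (simp only: pdt_eqI[OF has_pdt_schwarzian_x[OF \<phi> nz]] transport_pdt_pdx[OF \<phi> transport u] defs)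
  show ?thesis
    unfolding S Sx St u0_def[symmetric] u1_def[symmetric] u3_def[symmetric]
    using \<open>p \<noteq> 0\<close> by (simp add: field_simps power2_eq_square power3_eq_cube)
qed

lemma transport_velocity:
  assumes \<phi>: "smooth2 \<phi>" and nz: "\<And>x t. pdx \<phi> x t \<noteq> 0"
    and u_def: "u = (\<lambda>x t. - pdt \<phi> x t / pdx \<phi> x t)"
  shows "pdt \<phi> = (\<lambda>x t. - (u x t * pdx \<phi> x t))"
    and "x_differentiable u" "t_differentiable u" "x_differentiable (pdx u)"
proof -
  have \<phi>': "smooth2 (pdx \<phi>)" "smooth2 (pdt \<phi>)" "smooth2 (pdx (pdx \<phi>))" "smooth2 (pdx (pdt \<phi>))"
    using \<phi> by (simp_all add: smooth2_pdx smooth2_pdt)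
  note D = \<phi>'[THEN smooth2_x_differentiable, THEN x_differentiable_has_pdx]
    \<phi>'[THEN smooth2_t_differentiable, THEN t_differentiable_has_pdt]
  show "pdt \<phi> = (\<lambda>x t. - (u x t * pdx \<phi> x t))"
    using nz by (auto simp: u_def)
  show "x_differentiable u" "t_differentiable u"
    unfolding u_def by (auto intro!: x_differentiableI t_differentiableI derivative_eq_intros D nz)
  have "pdx u = (\<lambda>x t. (pdt \<phi> x t * pdx (pdx \<phi>) x t - pdx (pdt \<phi>) x t * pdx \<phi> x t) / (pdx \<phi> x t)\<^sup>2)"
    unfolding u_def
    by (rule pdx_eqI) (auto intro!: derivative_eq_intros D simp: nz field_simps power2_eq_square)
  then show "x_differentiable (pdx u)"
    by (auto intro!: x_differentiableI derivative_eq_intros D simp: nz)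
qed

lemma camassa_holm_of_momentum_transport:
  fixes a :: real
  assumes u: "x_differentiable u" "t_differentiable u"
    and S: "x_differentiable S" "t_differentiable S"
    and momentum: "pdx (pdx u) = (\<lambda>x t. u x t - a * S x t)"
    and transport: "pdt S x t + u x t * pdx S x t + 2 * pdx u x t * S x t + pdx (pdx (pdx u)) x t = 0"
  shows "pdt u x t - pdt (pdx (pdx u)) x t + a * pdx (pdx (pdx u)) x t
    + 3 * u x t * pdx u x t - 2 * pdx u x t * pdx (pdx u) x t - u x t * pdx (pdx (pdx u)) x t = 0"
proof -
  have uxxx: "pdx (pdx (pdx u)) = (\<lambda>x t. pdx u x t - a * pdx S x t)"
    unfolding momentum
    by (rule pdx_eqI) (auto intro!: derivative_eq_intros x_differentiable_has_pdx u S)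
  have uxxt: "pdt (pdx (pdx u)) = (\<lambda>x t. pdt u x t - a * pdt S x t)"
    unfolding momentum
    by (rule pdt_eqI) (auto intro!: derivative_eq_intros t_differentiable_has_pdt u S)
  have "pdt u x t - pdt (pdx (pdx u)) x t + a * pdx (pdx (pdx u)) x t
      + 3 * u x t * pdx u x t - 2 * pdx u x t * pdx (pdx u) x t - u x t * pdx (pdx (pdx u)) x t
    = a * (pdt S x t + u x t * pdx S x t + 2 * pdx u x t * S x t + pdx (pdx (pdx u)) x t)"
    unfolding uxxt uxxx unfolding momentum by (simp add: algebra_simps)
  also have "\<dots> = 0" using transport by simp
  finally show ?thesis .
qed

theorem mainTheorem3:
  fixes a :: real and \<phi> :: "real \<Rightarrow> real \<Rightarrow> real"
  assumes "a \<noteq> 0"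
    and "smooth2 \<phi>"
    and "\<And>x t. pdx \<phi> x t \<noteq> 0"
    and "\<And>x t. (let w = (\<lambda>x t. pdt \<phi> x t / pdx \<phi> x t) in
                  w x t - pdx (pdx w) x t) + a * schwarzian_x \<phi> x t = 0"
  shows "\<And>x t. (let u = (\<lambda>x t. - pdt \<phi> x t / pdx \<phi> x t) in
            pdt u x t - pdt (pdx (pdx u)) x t + a * pdx (pdx (pdx u)) x t
            + 3 * u x t * pdx u x t - 2 * pdx u x t * pdx (pdx u) x t
            - u x t * pdx (pdx (pdx u)) x t) = 0"
proof -
  note \<phi> = assms(2) and nz = assms(3)
  define u where "u = (\<lambda>x t. - pdt \<phi> x t / pdx \<phi> x t)"
  note velocity = transport_velocity[OF \<phi> nz u_def]
  have S: "x_differentiable (schwarzian_x \<phi>)" "t_differentiable (schwarzian_x \<phi>)"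
    using \<phi> nz by (simp_all add: x_differentiable_schwarzian_x t_differentiable_schwarzian_x)
  have w: "(\<lambda>x t. pdt \<phi> x t / pdx \<phi> x t) = (\<lambda>x t. - u x t)"
    by (simp add: u_def)
  have momentum: "pdx (pdx u) = (\<lambda>x t. u x t - a * schwarzian_x \<phi> x t)"
  proof (intro ext)
    fix x t
    show "pdx (pdx u) x t = u x t - a * schwarzian_x \<phi> x t"
      using assms(4)[of x t] unfolding Let_def w by (simp add: pdx_uminus velocity(2,4))
  qed
  then have "x_differentiable (pdx (pdx u))"
    by (auto intro!: x_differentiableI derivative_eq_intros x_differentiable_has_pdx velocity(2) S(1))
  note S_transport = schwarzian_x_transport[OF \<phi> nz velocity(1,2,4) this]
  fix x t
  show "?thesis x t"
    unfolding Let_def u_def[symmetric]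
    by (rule camassa_holm_of_momentum_transport[OF velocity(2,3) S momentum S_transport])
qed

end
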